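(* Let $C_1,C_2$ be maximal configurations of finite labeled prime event structures $\mathcal{E}_1=\langle E_1,<_1,\#_1,h_1\rangle$ and $\mathcal{E}_2=\langle E_2,<_2,\#_2,h_2\rangle$, respectively. Suppose $\varphi:C_1\to C_2$ is a necessary embedding that is not a sufficient embedding. Then there are concurrent events $e,e'\in C_1$ such that $\varphi(e)<_2\varphi(e')$.
   Context: A finite $\mathcal{X}$-labeled prime event structure has a finite event set, a strict partial order (causality), a labeling into $\mathcal{X}$, and a symmetric irreflexive conflict relation closed under causality; $\mathcal{X}$ contains $\varepsilon$; there is an event $\bot$ below all other events with label $\varepsilon$. A configuration is a left-closed, conflict-free set of events; maximal if no configuration strictly contains it. Events $e,e'$ are concurrent if $e\neq e'$, they are not causally ordered either way, and they are not in conflict. A necessary embedding $\varphi:C_1\to C_2$ is a bijection with $h_1(e)=h_2(\varphi(e))$ for all $e\in C_1$ and such that no $e\in C_1$ satisfies $e(<_1\cup<_2^\varphi)^+e$, where $<_2^\varphi=\{(\varphi^{-1}(a),\varphi^{-1}(b))\mid a,b\in C_2, a<_2b\}$ and $^+$ is transitive closure. A sufficient embedding is a label-preserving bijection $\varphi:C_1\to C_2$ such that $\varphi(e_1)<_2\varphi(e_2)$ implies $e_1<_1e_2$ for all $e_1,e_2\in C_1$. *)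

theory Defs
  imports Main
begin

definition pes :: "'e set \<Rightarrow> 'e rel \<Rightarrow> 'e rel \<Rightarrow> ('e \<Rightarrow> 'x) \<Rightarrow> 'x \<Rightarrow> 'e \<Rightarrow> bool" where
  "pes E lt cf h eps bt \<longleftrightarrow>
     finite E \<and>
     lt \<subseteq> E \<times> E \<and> irrefl lt \<and> trans lt \<and>
     cf \<subseteq> E \<times> E \<and> sym cf \<and> irrefl cf \<and>
     (\<forall>e e' e''. (e, e') \<in> cf \<and> (e', e'') \<in> lt \<longrightarrow> (e, e'') \<in> cf) \<and>
     bt \<in> E \<and> h bt = eps \<and> (\<forall>e\<in>E. e \<noteq> bt \<longrightarrow> (bt, e) \<in> lt)"

definition configuration :: "'e set \<Rightarrow> 'e rel \<Rightarrow> 'e rel \<Rightarrow> 'e set \<Rightarrow> bool" where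
  "configuration E lt cf C \<longleftrightarrow>
     C \<subseteq> E \<and>
     (\<forall>e\<in>C. \<forall>e'. (e', e) \<in> lt \<longrightarrow> e' \<in> C) \<and>
     (\<forall>e\<in>C. \<forall>e'\<in>C. (e, e') \<notin> cf)"

definition maximal_configuration :: "'e set \<Rightarrow> 'e rel \<Rightarrow> 'e rel \<Rightarrow> 'e set \<Rightarrow> bool" where
  "maximal_configuration E lt cf C \<longleftrightarrow>
     configuration E lt cf C \<and> \<not> (\<exists>C'. configuration E lt cf C' \<and> C \<subset> C')"

definition concurrent :: "'e rel \<Rightarrow> 'e rel \<Rightarrow> 'e \<Rightarrow> 'e \<Rightarrow> bool" where
  "concurrent lt cf e e' \<longleftrightarrow>
     e \<noteq> e' \<and> (e, e') \<notin> lt \<and> (e', e) \<notin> lt \<and> (e, e') \<notin> cf"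

definition pullback_rel :: "('a \<Rightarrow> 'b) \<Rightarrow> 'a set \<Rightarrow> 'b set \<Rightarrow> 'b rel \<Rightarrow> 'a rel" where
  "pullback_rel \<phi> C1 C2 lt2 =
     {(inv_into C1 \<phi> a, inv_into C1 \<phi> b) | a b. a \<in> C2 \<and> b \<in> C2 \<and> (a, b) \<in> lt2}"

definition necessary_embedding ::
  "('a \<Rightarrow> 'b) \<Rightarrow> 'a set \<Rightarrow> 'a rel \<Rightarrow> ('a \<Rightarrow> 'x) \<Rightarrow> 'b set \<Rightarrow> 'b rel \<Rightarrow> ('b \<Rightarrow> 'x) \<Rightarrow> bool" where
  "necessary_embedding \<phi> C1 lt1 h1 C2 lt2 h2 \<longleftrightarrow>
     bij_betw \<phi> C1 C2 \<and> (\<forall>e\<in>C1. h1 e = h2 (\<phi> e)) \<and>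
     \<not> (\<exists>e\<in>C1. (e, e) \<in> (lt1 \<union> pullback_rel \<phi> C1 C2 lt2)\<^sup>+)"

definition sufficient_embedding ::
  "('a \<Rightarrow> 'b) \<Rightarrow> 'a set \<Rightarrow> 'a rel \<Rightarrow> ('a \<Rightarrow> 'x) \<Rightarrow> 'b set \<Rightarrow> 'b rel \<Rightarrow> ('b \<Rightarrow> 'x) \<Rightarrow> bool" where
  "sufficient_embedding \<phi> C1 lt1 h1 C2 lt2 h2 \<longleftrightarrow>
     bij_betw \<phi> C1 C2 \<and> (\<forall>e\<in>C1. h1 e = h2 (\<phi> e)) \<and>
     (\<forall>e1\<in>C1. \<forall>e2\<in>C1. (\<phi> e1, \<phi> e2) \<in> lt2 \<longrightarrow> (e1, e2) \<in> lt1)"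

end

theory Submission
  imports Defs
begin

text \<open>If \<phi> is not sufficient, some e, e' in C1 have (\<phi> e, \<phi> e') in lt2 but (e, e') not
  in lt1. Neither is (e', e) in lt1: together with the pulled-back edge from e to e' it would
  close a cycle, which a necessary embedding forbids. Moreover e \<noteq> e' by irreflexivity of lt2,
  and e, e' are not in conflict because they lie in one configuration.\<close>

lemma pes_irrefl_causality:
  assumes "pes E lt cf h eps bt"
  shows "irrefl lt"
  using assms unfolding pes_def by simp

lemma configuration_conflict_free:
  assumes "configuration E lt cf C" and "e \<in> C" and "e' \<in> C"
  shows "(e, e') \<notin> cf"
  using assms unfolding configuration_def by simp

lemma pullback_relI:
  assumes "bij_betw \<phi> C1 C2" and "a \<in> C1" and "b \<in> C1" and "(\<phi> a, \<phi> b) \<in> lt2"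
  shows "(a, b) \<in> pullback_rel \<phi> C1 C2 lt2"
proof -
  have "a = inv_into C1 \<phi> (\<phi> a)" and "b = inv_into C1 \<phi> (\<phi> b)"
    using assms(1-3) by (simp_all add: bij_betw_inv_into_left)
  moreover have "\<phi> a \<in> C2" and "\<phi> b \<in> C2"
    using assms(1-3) by (simp_all add: bij_betw_apply)
  ultimately show ?thesis
    using assms(4) unfolding pullback_rel_def by blast
qed

lemma necessary_embedding_not_reversed:
  assumes "necessary_embedding \<phi> C1 lt1 h1 C2 lt2 h2"
    and "a \<in> C1" and "b \<in> C1" and "(\<phi> a, \<phi> b) \<in> lt2"
  shows "(b, a) \<notin> lt1"
proof
  let ?R = "lt1 \<union> pullback_rel \<phi> C1 C2 lt2"
  assume "(b, a) \<in> lt1"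
  moreover have "(a, b) \<in> pullback_rel \<phi> C1 C2 lt2"
    using assms unfolding necessary_embedding_def by (simp add: pullback_relI)
  ultimately have "(a, a) \<in> ?R\<^sup>+"
    by (meson UnI1 UnI2 r_into_trancl trancl_into_trancl)
  then show False
    using assms(1,2) unfolding necessary_embedding_def by auto
qed

lemma not_sufficient_embeddingE:
  assumes "necessary_embedding \<phi> C1 lt1 h1 C2 lt2 h2"
    and "\<not> sufficient_embedding \<phi> C1 lt1 h1 C2 lt2 h2"
  obtains e e' where "e \<in> C1" and "e' \<in> C1" and "(\<phi> e, \<phi> e') \<in> lt2" and "(e, e') \<notin> lt1"
  using assms unfolding necessary_embedding_def sufficient_embedding_def by auto

theorem lemma4:
  fixes E1 :: "'a set" and lt1 cf1 :: "'a rel" and h1 :: "'a \<Rightarrow> 'x" and bot1 :: 'a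
    and E2 :: "'b set" and lt2 cf2 :: "'b rel" and h2 :: "'b \<Rightarrow> 'x" and bot2 :: 'b
    and eps :: 'x and C1 :: "'a set" and C2 :: "'b set" and \<phi> :: "'a \<Rightarrow> 'b"
  assumes "pes E1 lt1 cf1 h1 eps bot1"
    and "pes E2 lt2 cf2 h2 eps bot2"
    and "maximal_configuration E1 lt1 cf1 C1"
    and "maximal_configuration E2 lt2 cf2 C2"
    and "necessary_embedding \<phi> C1 lt1 h1 C2 lt2 h2"
    and "\<not> sufficient_embedding \<phi> C1 lt1 h1 C2 lt2 h2"
  shows "\<exists>e\<in>C1. \<exists>e'\<in>C1. concurrent lt1 cf1 e e' \<and> (\<phi> e, \<phi> e') \<in> lt2"
proof -
  obtain e e' where e: "e \<in> C1" "e' \<in> C1" and edge: "(\<phi> e, \<phi> e') \<in> lt2"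
    and not_below: "(e, e') \<notin> lt1"
    using assms(5,6) by (rule not_sufficient_embeddingE)
  have "e \<noteq> e'"
    using edge pes_irrefl_causality[OF assms(2)] unfolding irrefl_def by blast
  moreover have "(e', e) \<notin> lt1"
    using necessary_embedding_not_reversed[OF assms(5) e edge] .
  moreover have "configuration E1 lt1 cf1 C1"
    using assms(3) unfolding maximal_configuration_def by simp
  then have "(e, e') \<notin> cf1"
    using e by (rule configuration_conflict_free)
  ultimately have "concurrent lt1 cf1 e e'"
    using not_below unfolding concurrent_def by simp
  with e edge show ?thesis by blast
qed

end
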